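(* Let $n\ge2$, $1\le k\le n-1$, $N=\binom n2$, and let $(s_t)_{t\in\mathbb Z}$ be the periodic extension of a uniformly random sorting network in $\Omega_n$. Let $\mathrm{Sp}_{k,n}=Y-X$ with $X=\max\{t\le0:s_t=k\}$, $Y=\min\{t>0:s_t=k\}$; let $\widehat{\mathrm{Sp}}_{k,n}$ have the conditional law of $\min\{t>0:s_t=k\}$ given $\{s_0=k\}$; let $\mathbf T_{FS,n}(k)=\min\{t\ge1:s_t=k\}$. Put $f'_1(L)=\mathbb P(\mathrm{Sp}_{k,n}=L)$, $f'_2(L)=\mathbb P(\widehat{\mathrm{Sp}}_{k,n}=L)$, $g'(L)=\mathbb P(\mathbf T_{FS,n}(k)=L)$, $\Delta g'(L)=g'(L+1)-g'(L)$, and $M=\mathbb P(s_1=k)=|\{\omega\in\Omega_n:s_1=k\}|/|\Omega_n|$. Then for all $L\ge1$, $$-\Delta g'(L)\cdot L=f'_1(L),\qquad -\Delta g'(L)=M\cdot f'_2(L).$$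
   Context: $\tau_k=(k,k+1)\in\mathfrak S_n$. A sorting network of size $n$ is $(s_1,\dots,s_N)$, $s_i\in\{1,\dots,n-1\}$, with $\tau_{s_1}\cdots\tau_{s_N}=(n\ n-1\ \dots\ 2\ 1)$; $\Omega_n$ is the set of them, with the uniform measure. Its periodic extension is $(s_t)_{t\in\mathbb Z}$ with $s_{t+N}=n-s_t$ for all $t$ (a $2N$-periodic sequence). *)

theory Defs
  imports Complex_Main "HOL-Combinatorics.Transposition"
begin

definition adj_tau :: "nat \<Rightarrow> nat \<Rightarrow> nat" where
  "adj_tau k = Transposition.transpose k (Suc k)"

definition word_prod :: "nat list \<Rightarrow> nat \<Rightarrow> nat" where
  "word_prod s = foldr (\<lambda>k f. adj_tau k \<circ> f) s id"

definition rev_perm :: "nat \<Rightarrow> nat \<Rightarrow> nat" where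
  "rev_perm n = (\<lambda>i. if 1 \<le> i \<and> i \<le> n then n + 1 - i else i)"

definition sorting_networks :: "nat \<Rightarrow> nat list set" where
  "sorting_networks n = {s. length s = n choose 2 \<and> set s \<subseteq> {1..n-1}
                          \<and> word_prod s = rev_perm n}"

text \<open>Periodic extension: s_t for t in Z, with s_{t+N} = n - s_t, where s_t = s!(t-1) for 1 <= t <= N.\<close>
definition per_ext :: "nat \<Rightarrow> nat list \<Rightarrow> int \<Rightarrow> nat" where
  "per_ext n s t = (let N = int (length s); q = (t - 1) div N; r = nat ((t - 1) mod N)
                    in if even q then s ! r else n - s ! r)"

definition unif_prob :: "nat \<Rightarrow> (nat list \<Rightarrow> bool) \<Rightarrow> real" where
  "unif_prob n P = real (card {s \<in> sorting_networks n. P s}) / real (card (sorting_networks n))"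

definition spacing :: "nat \<Rightarrow> nat \<Rightarrow> nat list \<Rightarrow> int" where
  "spacing n k s = (LEAST t. t > 0 \<and> per_ext n s t = k) - (GREATEST t. t \<le> 0 \<and> per_ext n s t = k)"

definition first_after :: "nat \<Rightarrow> nat \<Rightarrow> nat list \<Rightarrow> int" where
  "first_after n k s = (LEAST t. t > 0 \<and> per_ext n s t = k)"

definition T_FS :: "nat \<Rightarrow> nat \<Rightarrow> nat list \<Rightarrow> int" where
  "T_FS n k s = (LEAST t. t \<ge> 1 \<and> per_ext n s t = k)"

definition f1' :: "nat \<Rightarrow> nat \<Rightarrow> int \<Rightarrow> real" where
  "f1' n k L = unif_prob n (\<lambda>s. spacing n k s = L)"

definition f2' :: "nat \<Rightarrow> nat \<Rightarrow> int \<Rightarrow> real" where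
  "f2' n k L = unif_prob n (\<lambda>s. first_after n k s = L \<and> per_ext n s 0 = k)
               / unif_prob n (\<lambda>s. per_ext n s 0 = k)"

definition g' :: "nat \<Rightarrow> nat \<Rightarrow> int \<Rightarrow> real" where
  "g' n k L = unif_prob n (\<lambda>s. T_FS n k s = L)"

end

theory Submission
  imports Defs
begin

text \<open>
  The rotation \<open>(s\<^sub>1, \<dots>, s\<^sub>N) \<mapsto> (s\<^sub>2, \<dots>, s\<^sub>N, n - s\<^sub>1)\<close> is a bijection of
  \<open>\<Omega>\<^sub>n\<close> that shifts the periodic extension by one time step, so the law of \<open>(s\<^sub>t)\<close> is
  shift invariant. Hence every event "consecutive visits to \<open>k\<close> at times \<open>a\<close> and \<open>a + L\<close>"
  has the same probability \<open>\<beta> = P(s\<^sub>0 = k, next visit at L)\<close>.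
  Shifting by one step, \<open>{T\<^sub>F\<^sub>S = L}\<close> becomes the disjoint union of
  \<open>{s\<^sub>1 = k, next visit at L + 1}\<close> and \<open>{T\<^sub>F\<^sub>S = L + 1}\<close>, so \<open>-\<Delta>g'(L) = \<beta>\<close>.
  The event \<open>{Sp = L}\<close> is the disjoint union over the \<open>L\<close> possible positions of the gap
  straddling time \<open>0\<close>, so \<open>f'\<^sub>1(L) = L \<beta>\<close>; and \<open>M f'\<^sub>2(L) = \<beta>\<close> because
  \<open>P(s\<^sub>1 = k) = P(s\<^sub>0 = k)\<close>.
\<close>

section \<open>Visits of an integer-indexed sequence\<close>

lemma ex_least_int_greater:
  fixes P :: "int \<Rightarrow> bool"
  assumes "a < t\<^sub>0" "P t\<^sub>0"
  shows "\<exists>m. a < m \<and> P m \<and> (\<forall>t. a < t \<and> t < m \<longrightarrow> \<not> P t)"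
proof -
  let ?S = "{t. a < t \<and> t \<le> t\<^sub>0 \<and> P t}"
  have "finite ?S" by (rule finite_subset[of _ "{a<..t\<^sub>0}"]) auto
  moreover have "t\<^sub>0 \<in> ?S" using assms by simp
  ultimately have min: "Min ?S \<in> ?S" and below: "\<And>t. t \<in> ?S \<Longrightarrow> Min ?S \<le> t"
    using Min_in Min_le by blast+
  have "\<not> P t" if "a < t" "t < Min ?S" for t
    using below[of t] min that by auto
  with min show ?thesis by blast
qed

lemma ex_greatest_int_le:
  fixes P :: "int \<Rightarrow> bool"
  assumes "t\<^sub>0 \<le> b" "P t\<^sub>0"
  shows "\<exists>m. m \<le> b \<and> P m \<and> (\<forall>t. m < t \<and> t \<le> b \<longrightarrow> \<not> P t)"
proof -
  let ?S = "{t. t\<^sub>0 \<le> t \<and> t \<le> b \<and> P t}"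
  have "finite ?S" by (rule finite_subset[of _ "{t\<^sub>0..b}"]) auto
  moreover have "t\<^sub>0 \<in> ?S" using assms by simp
  ultimately have max: "Max ?S \<in> ?S" and above: "\<And>t. t \<in> ?S \<Longrightarrow> t \<le> Max ?S"
    using Max_in Max_ge by blast+
  have "\<not> P t" if "Max ?S < t" "t \<le> b" for t
    using above[of t] max that by auto
  with max show ?thesis by blast
qed

lemma Least_int_greater_eq_iff:
  fixes P :: "int \<Rightarrow> bool"
  assumes "\<exists>t>a. P t"
  shows "(LEAST t. a < t \<and> P t) = m \<longleftrightarrow> a < m \<and> P m \<and> (\<forall>t. a < t \<and> t < m \<longrightarrow> \<not> P t)"
    (is "_ \<longleftrightarrow> ?least m")
proof
  have Least_eq: "(LEAST t. a < t \<and> P t) = m" if "?least m" for m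
    by (rule Least_equality) (use that in \<open>auto simp: not_less[symmetric]\<close>)
  then show "?least m \<Longrightarrow> (LEAST t. a < t \<and> P t) = m" .
  obtain m\<^sub>0 where "?least m\<^sub>0" using assms ex_least_int_greater by blast
  then show "(LEAST t. a < t \<and> P t) = m \<Longrightarrow> ?least m" using Least_eq by blast
qed

lemma Greatest_int_le_eq_iff:
  fixes P :: "int \<Rightarrow> bool"
  assumes "\<exists>t\<le>b. P t"
  shows "(GREATEST t. t \<le> b \<and> P t) = m \<longleftrightarrow> m \<le> b \<and> P m \<and> (\<forall>t. m < t \<and> t \<le> b \<longrightarrow> \<not> P t)"
    (is "_ \<longleftrightarrow> ?greatest m")
proof
  have Greatest_eq: "(GREATEST t. t \<le> b \<and> P t) = m" if "?greatest m" for m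
    by (rule Greatest_equality) (use that in \<open>auto simp: not_less[symmetric]\<close>)
  then show "?greatest m \<Longrightarrow> (GREATEST t. t \<le> b \<and> P t) = m" .
  obtain m\<^sub>0 where "?greatest m\<^sub>0" using assms ex_greatest_int_le by blast
  then show "(GREATEST t. t \<le> b \<and> P t) = m \<Longrightarrow> ?greatest m" using Greatest_eq by blast
qed

definition first_visit_after :: "(int \<Rightarrow> 'a) \<Rightarrow> 'a \<Rightarrow> int \<Rightarrow> int \<Rightarrow> bool" where
  "first_visit_after f k a b \<longleftrightarrow> a < b \<and> f b = k \<and> (\<forall>t. a < t \<and> t < b \<longrightarrow> f t \<noteq> k)"

definition consecutive_visits :: "(int \<Rightarrow> 'a) \<Rightarrow> 'a \<Rightarrow> int \<Rightarrow> int \<Rightarrow> bool" where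
  "consecutive_visits f k a b \<longleftrightarrow> f a = k \<and> first_visit_after f k a b"

lemma Least_visit_eq_iff:
  assumes "\<exists>t>a. f t = k"
  shows "(LEAST t. a < t \<and> f t = k) = b \<longleftrightarrow> first_visit_after f k a b"
  unfolding first_visit_after_def using Least_int_greater_eq_iff[OF assms] by simp

lemma first_visit_after_shift:
  "first_visit_after (\<lambda>t. f (t + d)) k a b \<longleftrightarrow> first_visit_after f k (a + d) (b + d)"
proof -
  have "(\<forall>t. a < t \<and> t < b \<longrightarrow> f (t + d) \<noteq> k) \<longleftrightarrow> (\<forall>u. a + d < u \<and> u < b + d \<longrightarrow> f u \<noteq> k)"
  proof
    assume "\<forall>t. a < t \<and> t < b \<longrightarrow> f (t + d) \<noteq> k"
    then show "\<forall>u. a + d < u \<and> u < b + d \<longrightarrow> f u \<noteq> k"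
      by (metis add_less_cancel_right diff_add_cancel)
  qed auto
  then show ?thesis by (simp add: first_visit_after_def)
qed

lemma consecutive_visits_shift:
  "consecutive_visits (\<lambda>t. f (t + d)) k a b \<longleftrightarrow> consecutive_visits f k (a + d) (b + d)"
  by (simp add: consecutive_visits_def first_visit_after_shift)

lemma first_visit_after_split:
  assumes "a + 1 < b"
  shows "first_visit_after f k (a + 1) b \<longleftrightarrow> consecutive_visits f k (a + 1) b \<or> first_visit_after f k a b"
proof -
  have "\<And>t. a < t \<longleftrightarrow> t = a + 1 \<or> a + 1 < t" by arith
  then show ?thesis using assms by (auto simp: consecutive_visits_def first_visit_after_def)
qed

lemma not_consecutive_visits_and_first_visit_after:
  "\<not> (consecutive_visits f k (a + 1) b \<and> first_visit_after f k a b)"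
  using less_add_one[of a] unfolding consecutive_visits_def first_visit_after_def by blast

lemma consecutive_visits_overlap:
  assumes "consecutive_visits f k a b" "consecutive_visits f k a' b'" "a \<le> a'" "a' < b"
  shows "a' = a"
  using assms unfolding consecutive_visits_def first_visit_after_def by force

lemma gap_around_zero_eq_iff:
  assumes "\<exists>t>0. f t = k" "\<exists>t\<le>0. f t = k"
  shows "(LEAST t. t > 0 \<and> f t = k) - (GREATEST t. t \<le> 0 \<and> f t = k) = L
         \<longleftrightarrow> (\<exists>j\<in>{0..<L}. consecutive_visits f k (- j) (L - j))"
proof -
  define Y where "Y = (LEAST t. t > 0 \<and> f t = k)"
  define X where "X = (GREATEST t. t \<le> 0 \<and> f t = k)"
  have Y: "first_visit_after f k 0 Y"
    unfolding Y_def using Least_visit_eq_iff[OF assms(1)] by blast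
  have X: "X \<le> 0 \<and> f X = k \<and> (\<forall>t. X < t \<and> t \<le> 0 \<longrightarrow> f t \<noteq> k)"
    unfolding X_def using Greatest_int_le_eq_iff[OF assms(2)] by blast
  show ?thesis
    unfolding Y_def[symmetric] X_def[symmetric]
  proof
    assume "Y - X = L"
    then have Y_eq: "Y = L - - X" by simp
    have "consecutive_visits f k X Y"
      unfolding consecutive_visits_def first_visit_after_def
    proof (intro conjI allI impI)
      fix t assume "X < t \<and> t < Y"
      then show "f t \<noteq> k" using X Y by (cases "t \<le> 0") (auto simp: first_visit_after_def)
    qed (use X Y in \<open>auto simp: first_visit_after_def\<close>)
    then show "\<exists>j\<in>{0..<L}. consecutive_visits f k (- j) (L - j)"
      using X Y unfolding Y_eq by (intro bexI[of _ "- X"]) (simp_all add: first_visit_after_def)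
  next
    assume "\<exists>j\<in>{0..<L}. consecutive_visits f k (- j) (L - j)"
    then obtain j where j: "0 \<le> j" "j < L" and gap: "consecutive_visits f k (- j) (L - j)"
      by auto
    have "first_visit_after f k 0 (L - j)"
      using gap j by (simp add: consecutive_visits_def first_visit_after_def)
    then have "Y = L - j"
      unfolding Y_def using Least_visit_eq_iff[OF assms(1)] by blast
    moreover have "- j \<le> 0 \<and> f (- j) = k \<and> (\<forall>t. - j < t \<and> t \<le> 0 \<longrightarrow> f t \<noteq> k)"
      using gap j by (simp add: consecutive_visits_def first_visit_after_def)
    then have "X = - j"
      unfolding X_def using Greatest_int_le_eq_iff[OF assms(2)] by blast
    ultimately show "Y - X = L" by simp
  qed
qed

section \<open>Sorting networks and their periodic extension\<close>

lemma word_prod_Cons: "word_prod (a # s) = adj_tau a \<circ> word_prod s"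
  by (simp add: word_prod_def)

lemma word_prod_snoc: "word_prod (s @ [a]) = word_prod s \<circ> adj_tau a"
  by (induction s) (auto simp: word_prod_def)

lemma adj_tau_adj_tau [simp]: "adj_tau a (adj_tau a x) = x"
  by (simp add: adj_tau_def transpose_def)

lemma rev_perm_adj_tau:
  assumes "1 \<le> a" "a \<le> n - 1"
  shows "rev_perm n (adj_tau (n - a) x) = adj_tau a (rev_perm n x)"
  using assms by (auto simp: rev_perm_def adj_tau_def transpose_def)

lemma word_prod_le_if_not_in_set: "k \<notin> set s \<Longrightarrow> i \<le> k \<Longrightarrow> word_prod s i \<le> k"
  by (induction s) (auto simp: word_prod_def adj_tau_def transpose_def)

lemma finite_sorting_networks: "finite (sorting_networks n)"
proof (rule finite_subset)
  show "sorting_networks n \<subseteq> {s. set s \<subseteq> {1..n-1} \<and> length s = n choose 2}"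
    by (auto simp: sorting_networks_def)
qed (rule finite_lists_length_eq, simp)

lemma sorting_network_nonempty: "2 \<le> n \<Longrightarrow> s \<in> sorting_networks n \<Longrightarrow> s \<noteq> []"
  by (auto simp: sorting_networks_def)

text \<open>Without \<open>\<tau>\<^sub>k\<close> no point of \<open>{..k}\<close> can leave it, but the reversal sends \<open>1\<close> to \<open>n\<close>.\<close>

lemma in_set_sorting_network:
  assumes "s \<in> sorting_networks n" "1 \<le> k" "k \<le> n - 1"
  shows "k \<in> set s"
proof (rule ccontr)
  assume "k \<notin> set s"
  then have "word_prod s 1 \<le> k" using word_prod_le_if_not_in_set assms(2) by blast
  moreover have "word_prod s 1 = n" using assms by (simp add: sorting_networks_def rev_perm_def)
  ultimately show False using assms by simp
qed

definition rotate_network :: "nat \<Rightarrow> nat list \<Rightarrow> nat list" where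
  "rotate_network n s = tl s @ [n - hd s]"

lemma rotate_network_in_sorting_networks:
  assumes "2 \<le> n" "s \<in> sorting_networks n"
  shows "rotate_network n s \<in> sorting_networks n"
proof -
  obtain a r where s: "s = a # r" using sorting_network_nonempty[OF assms] by (cases s) auto
  have a: "1 \<le> a" "a \<le> n - 1" and r: "set r \<subseteq> {1..n-1}"
    using assms(2) s by (auto simp: sorting_networks_def)
  have prod: "adj_tau a \<circ> word_prod r = rev_perm n"
    using assms(2) s by (simp add: sorting_networks_def word_prod_Cons)
  have "word_prod (r @ [n - a]) x = rev_perm n x" for x
  proof -
    have "word_prod (r @ [n - a]) x = adj_tau a (adj_tau a (word_prod r (adj_tau (n - a) x)))"
      by (simp add: word_prod_snoc)
    also have "\<dots> = adj_tau a (rev_perm n (adj_tau (n - a) x))"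
      using prod by (metis comp_apply)
    also have "\<dots> = rev_perm n x"
      using rev_perm_adj_tau[OF a] by simp
    finally show ?thesis .
  qed
  then show ?thesis
    using assms(2) s a r by (auto simp: sorting_networks_def rotate_network_def)
qed

lemma inj_on_rotate_network:
  assumes "2 \<le> n"
  shows "inj_on (rotate_network n) (sorting_networks n)"
proof
  fix s s' assume s: "s \<in> sorting_networks n" and s': "s' \<in> sorting_networks n"
    and "rotate_network n s = rotate_network n s'"
  then have "tl s = tl s'" "n - hd s = n - hd s'" by (auto simp: rotate_network_def)
  moreover have "s \<noteq> []" "s' \<noteq> []"
    using sorting_network_nonempty[OF assms] s s' by auto
  moreover from this have "hd s \<in> {1..n-1}" "hd s' \<in> {1..n-1}"
    using s s' by (auto simp: sorting_networks_def intro!: subsetD[OF _ hd_in_set])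
  ultimately show "s = s'" by (metis atLeastAtMost_iff diff_diff_cancel diff_le_self le_trans list.expand)
qed

lemma bij_betw_rotate_network:
  assumes "2 \<le> n"
  shows "bij_betw (rotate_network n) (sorting_networks n) (sorting_networks n)"
  using endo_inj_surj[OF finite_sorting_networks _ inj_on_rotate_network[OF assms]]
    rotate_network_in_sorting_networks[OF assms] inj_on_rotate_network[OF assms]
  by (auto simp: bij_betw_def)

lemma per_ext_nth: "i < length s \<Longrightarrow> per_ext n s (int i + 1) = s ! i"
  by (simp add: per_ext_def Let_def)

lemma per_ext_periodic: "per_ext n s (t + 2 * int (length s)) = per_ext n s t"
proof (cases "s = []")
  case False
  define N where "N = int (length s)"
  have "N \<noteq> 0" using False by (simp add: N_def)
  have "t + 2 * N - 1 = (t - 1) + N * 2" by simp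
  then have "(t + 2 * N - 1) div N = 2 + (t - 1) div N" "(t + 2 * N - 1) mod N = (t - 1) mod N"
    by (simp_all only: div_mult_self2[OF \<open>N \<noteq> 0\<close>] mod_mult_self2)
  then show ?thesis by (simp add: per_ext_def Let_def N_def[symmetric])
qed simp

lemma per_ext_visits:
  assumes "s \<in> sorting_networks n" "1 \<le> k" "k \<le> n - 1"
  shows "\<exists>t>0. per_ext n s t = k" and "\<exists>t\<le>0. per_ext n s t = k"
proof -
  obtain i where i: "i < length s" "s ! i = k"
    using in_set_sorting_network[OF assms] by (auto simp: in_set_conv_nth)
  then show "\<exists>t>0. per_ext n s t = k"
    using per_ext_nth by (intro exI[of _ "int i + 1"]) auto
  show "\<exists>t\<le>0. per_ext n s t = k"
    using per_ext_nth[OF i(1)] per_ext_periodic[of n s "int i + 1 - 2 * int (length s)"] i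
    by (intro exI[of _ "int i + 1 - 2 * int (length s)"]) auto
qed

lemma per_ext_rotate_network:
  assumes "2 \<le> n" "s \<in> sorting_networks n"
  shows "per_ext n (rotate_network n s) = (\<lambda>t. per_ext n s (t + 1))"
proof
  fix t
  obtain a r where s: "s = a # r" using sorting_network_nonempty[OF assms] by (cases s) auto
  have a: "a \<le> n" using assms(2) s by (auto simp: sorting_networks_def)
  define N where "N = int (length s)"
  have N: "N > 0" "int (length (rotate_network n s)) = N"
    using s by (auto simp: N_def rotate_network_def)
  define q where "q = (t - 1) div N"
  define m where "m = (t - 1) mod N"
  have m: "0 \<le> m" "m < N" "t - 1 = N * q + m" using N by (auto simp: m_def q_def)
  show "per_ext n (rotate_network n s) t = per_ext n s (t + 1)"
  proof (cases "m + 1 < N")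
    case True
    have t: "t = (m + 1) + q * N" using m by (simp add: algebra_simps)
    have "t div N = q" "t mod N = m + 1"
      using m True N unfolding t by simp_all
    moreover have "rotate_network n s ! nat m = s ! nat (m + 1)"
      using True m s N by (auto simp: rotate_network_def N_def nth_append nat_add_distrib)
    ultimately show ?thesis using N unfolding per_ext_def
      by (simp add: Let_def N_def[symmetric] q_def[symmetric] m_def[symmetric])
  next
    case False
    then have "m = N - 1" using m by auto
    then have "t = (q + 1) * N" using m by (simp add: algebra_simps)
    then have "t div N = q + 1" "t mod N = 0" using N by simp_all
    moreover have "rotate_network n s ! nat m = n - a"
      using \<open>m = N - 1\<close> s by (simp add: rotate_network_def N_def nth_append)
    moreover have "s ! 0 = a" using s by simp
    ultimately show ?thesis using N a unfolding per_ext_def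
      by (simp add: Let_def N_def[symmetric] q_def[symmetric] m_def[symmetric])
  qed
qed

section \<open>Shift invariance of the uniform measure\<close>

lemma shift_invariant_int:
  fixes F :: "((int \<Rightarrow> 'a) \<Rightarrow> bool) \<Rightarrow> 'b"
  assumes shift_one: "\<And>Q. F (\<lambda>f. Q (\<lambda>t. f (t + 1))) = F Q"
  shows "F (\<lambda>f. Q (\<lambda>t. f (t + d))) = F Q"
proof (induction d rule: int_induct[where k = 0])
  case (step1 i)
  have "F (\<lambda>f. Q (\<lambda>t. f (t + (i + 1)))) = F (\<lambda>f. (\<lambda>g. Q (\<lambda>t. g (t + i))) (\<lambda>t. f (t + 1)))"
    by (simp add: ac_simps)
  also have "\<dots> = F (\<lambda>f. Q (\<lambda>t. f (t + i)))"
    by (rule shift_one)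
  finally show ?case using step1.IH by simp
next
  case (step2 i)
  have "F (\<lambda>f. Q (\<lambda>t. f (t + (i - 1)))) = F (\<lambda>f. (\<lambda>g. Q (\<lambda>t. g (t + (i - 1)))) (\<lambda>t. f (t + 1)))"
    by (rule shift_one[symmetric])
  also have "\<dots> = F (\<lambda>f. Q (\<lambda>t. f (t + i)))"
    by (simp add: ac_simps)
  finally show ?case using step2.IH by simp
qed simp

lemma unif_prob_cong:
  "(\<And>s. s \<in> sorting_networks n \<Longrightarrow> P s \<longleftrightarrow> Q s) \<Longrightarrow> unif_prob n P = unif_prob n Q"
  unfolding unif_prob_def by (metis (mono_tags, lifting) Collect_cong)

lemma unif_prob_nonneg: "0 \<le> unif_prob n P"
  by (simp add: unif_prob_def)

lemma unif_prob_mono: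
  assumes "\<And>s. P s \<Longrightarrow> Q s"
  shows "unif_prob n P \<le> unif_prob n Q"
proof -
  have "card {s \<in> sorting_networks n. P s} \<le> card {s \<in> sorting_networks n. Q s}"
    using finite_sorting_networks assms by (intro card_mono) auto
  then show ?thesis by (simp add: unif_prob_def divide_right_mono)
qed

lemma unif_prob_disj:
  assumes "\<And>s. \<not> (P s \<and> Q s)"
  shows "unif_prob n (\<lambda>s. P s \<or> Q s) = unif_prob n P + unif_prob n Q"
proof -
  let ?S = "sorting_networks n"
  have "{s \<in> ?S. P s \<or> Q s} = {s \<in> ?S. P s} \<union> {s \<in> ?S. Q s}" by auto
  moreover have "card ({s \<in> ?S. P s} \<union> {s \<in> ?S. Q s}) = card {s \<in> ?S. P s} + card {s \<in> ?S. Q s}"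
    using finite_sorting_networks assms by (intro card_Un_disjoint) auto
  ultimately show ?thesis by (simp add: unif_prob_def add_divide_distrib)
qed

lemma unif_prob_Bex:
  assumes "finite J" "\<And>i j s. i \<in> J \<Longrightarrow> j \<in> J \<Longrightarrow> i \<noteq> j \<Longrightarrow> \<not> (P i s \<and> P j s)"
  shows "unif_prob n (\<lambda>s. \<exists>j\<in>J. P j s) = (\<Sum>j\<in>J. unif_prob n (P j))"
proof -
  let ?S = "sorting_networks n"
  have "{s \<in> ?S. \<exists>j\<in>J. P j s} = (\<Union>j\<in>J. {s \<in> ?S. P j s})" by auto
  moreover have "card (\<Union>j\<in>J. {s \<in> ?S. P j s}) = (\<Sum>j\<in>J. card {s \<in> ?S. P j s})"
    using finite_sorting_networks assms by (intro card_UN_disjoint) auto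
  ultimately show ?thesis by (simp add: unif_prob_def sum_divide_distrib)
qed

lemma unif_prob_shift_one:
  assumes "2 \<le> n"
  shows "unif_prob n (\<lambda>s. Q (\<lambda>t. per_ext n s (t + 1))) = unif_prob n (\<lambda>s. Q (per_ext n s))"
proof -
  have "bij_betw (rotate_network n)
          {s \<in> sorting_networks n. Q (\<lambda>t. per_ext n s (t + 1))} {s \<in> sorting_networks n. Q (per_ext n s)}"
    by (intro bij_betw_Collect bij_betw_rotate_network[OF assms]) (simp add: per_ext_rotate_network[OF assms])
  then show ?thesis by (simp add: unif_prob_def bij_betw_same_card)
qed

lemma unif_prob_shift:
  assumes "2 \<le> n"
  shows "unif_prob n (\<lambda>s. Q (\<lambda>t. per_ext n s (t + d))) = unif_prob n (\<lambda>s. Q (per_ext n s))"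
  using shift_invariant_int[where F = "\<lambda>Q. unif_prob n (\<lambda>s. Q (per_ext n s))"]
    unif_prob_shift_one[OF assms] by blast

section \<open>Spacings and first passage times\<close>

definition gap_prob :: "nat \<Rightarrow> nat \<Rightarrow> int \<Rightarrow> real" where
  "gap_prob n k L = unif_prob n (\<lambda>s. consecutive_visits (per_ext n s) k 0 L)"

context
  fixes n k :: nat
  assumes k: "1 \<le> k" "k \<le> n - 1"
begin

lemma unif_prob_consecutive_visits_eq_gap_prob:
  "unif_prob n (\<lambda>s. consecutive_visits (per_ext n s) k a (a + L)) = gap_prob n k L"
proof -
  have "2 \<le> n" using k by simp
  then show ?thesis
    unfolding gap_prob_def
    using unif_prob_shift[of n "\<lambda>f. consecutive_visits f k 0 L" a]
    by (simp add: consecutive_visits_shift add.commute)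
qed

lemma g'_eq_first_visit:
  assumes "0 < m"
  shows "g' n k m = unif_prob n (\<lambda>s. first_visit_after (per_ext n s) k 0 m)"
  unfolding g'_def T_FS_def int_one_le_iff_zero_less
  by (intro unif_prob_cong Least_visit_eq_iff per_ext_visits(1)[OF _ k])

lemma g'_decrement:
  assumes "1 \<le> L"
  shows "g' n k L - g' n k (L + 1) = gap_prob n k L"
proof -
  have "2 \<le> n" using k by simp
  have split: "first_visit_after f k 1 (L + 1)
                \<longleftrightarrow> consecutive_visits f k 1 (L + 1) \<or> first_visit_after f k 0 (L + 1)" for f
    using first_visit_after_split[of 0 "L + 1"] assms by simp
  have "g' n k L = unif_prob n (\<lambda>s. first_visit_after (\<lambda>t. per_ext n s (t + 1)) k 0 L)"
    using g'_eq_first_visit assms unif_prob_shift[OF \<open>2 \<le> n\<close>, of "\<lambda>f. first_visit_after f k 0 L"]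
    by simp
  also have "\<dots> = unif_prob n (\<lambda>s. consecutive_visits (per_ext n s) k 1 (L + 1)
                                   \<or> first_visit_after (per_ext n s) k 0 (L + 1))"
    by (simp add: first_visit_after_shift split)
  also have "\<dots> = gap_prob n k L + g' n k (L + 1)"
    using unif_prob_disj not_consecutive_visits_and_first_visit_after[of _ k 0]
      unif_prob_consecutive_visits_eq_gap_prob[of 1 L] g'_eq_first_visit[of "L + 1"] assms
    by (simp add: add.commute)
  finally show ?thesis by simp
qed

lemma f1'_eq_gap_prob:
  assumes "0 \<le> L"
  shows "f1' n k L = of_int L * gap_prob n k L"
proof -
  have "f1' n k L = unif_prob n (\<lambda>s. \<exists>j\<in>{0..<L}. consecutive_visits (per_ext n s) k (- j) (L - j))"
    unfolding f1'_def spacing_def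
    by (intro unif_prob_cong gap_around_zero_eq_iff per_ext_visits[OF _ k])
  also have "\<dots> = (\<Sum>j\<in>{0..<L}. unif_prob n (\<lambda>s. consecutive_visits (per_ext n s) k (- j) (L - j)))"
  proof (rule unif_prob_Bex)
    fix i j s assume "i \<in> {0..<L}" "j \<in> {0..<L}" "i \<noteq> j"
    then show "\<not> (consecutive_visits (per_ext n s) k (- i) (L - i)
                 \<and> consecutive_visits (per_ext n s) k (- j) (L - j))"
      using consecutive_visits_overlap[of "per_ext n s" k "- i" "L - i" "- j" "L - j"]
        consecutive_visits_overlap[of "per_ext n s" k "- j" "L - j" "- i" "L - i"]
      by (cases "i < j") auto
  qed simp
  also have "\<dots> = (\<Sum>j\<in>{0..<L}. gap_prob n k L)"
    using unif_prob_consecutive_visits_eq_gap_prob[of "- j" L for j] by simp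
  finally show ?thesis using assms by simp
qed

lemma unif_prob_times_f2'_eq_gap_prob:
  "unif_prob n (\<lambda>s. per_ext n s 1 = k) * f2' n k L = gap_prob n k L"
proof -
  have "2 \<le> n" using k by simp
  let ?M = "unif_prob n (\<lambda>s. per_ext n s 0 = k)"
  have M: "unif_prob n (\<lambda>s. per_ext n s 1 = k) = ?M"
    using unif_prob_shift[OF \<open>2 \<le> n\<close>, of "\<lambda>f. f 0 = k" 1] by simp
  have "unif_prob n (\<lambda>s. first_after n k s = L \<and> per_ext n s 0 = k) = gap_prob n k L"
    unfolding first_after_def gap_prob_def consecutive_visits_def
    using Least_visit_eq_iff[OF per_ext_visits(1)[OF _ k]] by (intro unif_prob_cong) blast
  moreover have "gap_prob n k L \<le> ?M"
    unfolding gap_prob_def consecutive_visits_def by (rule unif_prob_mono) simp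
  moreover have "0 \<le> gap_prob n k L"
    unfolding gap_prob_def by (rule unif_prob_nonneg)
  \<comment> \<open>if \<open>?M = 0\<close> then \<open>f2'\<close> is the junk value \<open>x / 0 = 0\<close>, but then \<open>gap_prob\<close> vanishes too\<close>
  ultimately show ?thesis
    using M by (cases "?M = 0") (simp_all add: f2'_def)
qed

end

theorem proposition4p6:
  fixes n k :: nat and L :: int
  assumes "n \<ge> 2" and "1 \<le> k" and "k \<le> n - 1" and "L \<ge> 1"
  shows "- (g' n k (L + 1) - g' n k L) * real_of_int L = f1' n k L
       \<and> - (g' n k (L + 1) - g' n k L) = unif_prob n (\<lambda>s. per_ext n s 1 = k) * f2' n k L"
proof -
  \<comment> \<open>\<open>n \<ge> 2\<close> is implied by \<open>1 \<le> k \<le> n - 1\<close>\<close>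
  have "- (g' n k (L + 1) - g' n k L) = gap_prob n k L"
    using g'_decrement[OF assms(2,3,4)] by simp
  then show ?thesis
    using f1'_eq_gap_prob[OF assms(2,3)] unif_prob_times_f2'_eq_gap_prob[OF assms(2,3)] assms(4)
    by simp
qed

end
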